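(* Let $h:[\ell,r]\to\mathbb{R}$ be a continuous concave function, $s>0$, and $P\subset\mathrm{xExt}(h)$ a set with $\ell,r\in P$ such that for every $y\in\mathrm{xExt}(h)$ there is $x\in P$ with $|x-y|<s$. Suppose $|h'_\pm|\leq m$ for some $m\geq0$, and let $\bar{h}:[\ell,r]\to\mathbb{R}$ be a concave function with $\bar{h}(x)\geq h(x)$ for all $x\in P$. Then $\bar{h}(x)+2ms\geq h(x)$ for all $x\in[\ell,r]$.
   Context: $h'_\pm(x)=\lim_{y\to x^\pm}\frac{h(y)-h(x)}{y-x}$ are the one-sided derivatives. $\mathrm{xExt}(h)=\{\ell,r\}\cup\{x\in(\ell,r): h|_{[x-\delta,x+\delta]}\text{ is not linear for any }\delta>0\}$. *)

theory Defs
  imports "HOL-Analysis.Analysis"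
begin

definition xExt :: "(real \<Rightarrow> real) \<Rightarrow> real \<Rightarrow> real \<Rightarrow> real set" where
  "xExt h l r = {l, r} \<union>
     {x \<in> {l<..<r}. \<not> (\<exists>d>0. \<exists>a b. \<forall>y\<in>{x-d..x+d}. h y = a * y + b)}"

definition has_right_deriv :: "(real \<Rightarrow> real) \<Rightarrow> real \<Rightarrow> real \<Rightarrow> bool" where
  "has_right_deriv h x D \<longleftrightarrow> ((\<lambda>y. (h y - h x) / (y - x)) \<longlongrightarrow> D) (at_right x)"

definition has_left_deriv :: "(real \<Rightarrow> real) \<Rightarrow> real \<Rightarrow> real \<Rightarrow> bool" where
  "has_left_deriv h x D \<longleftrightarrow> ((\<lambda>y. (h y - h x) / (y - x)) \<longlongrightarrow> D) (at_left x)"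

end

theory Submission
  imports Defs
begin

(* Fix an interior point x and let c = h'_+(x), so |c| <= m. The tangent line L of slope c
   through (x, h x) majorises h, and the set where h = L is an interval [e1, e2] whose ends are
   extended extreme points while its interior contains none. Points of P chosen within s of e1
   and e2 satisfy h >= L - 2ms because h is m-Lipschitz. If they lie on both sides of x, concavity
   of hbar along the chord between them gives hbar x >= L x - 2ms = h x - 2ms. Otherwise one of
   them lies within s of x, and the chord from it to the far end of [l, r] along a line of slope
   m or -m gives the same bound. *)

lemma concave_on_slope_ge:
  fixes h :: "real \<Rightarrow> real"
  assumes "concave_on I h" "x \<in> I" "y \<in> I" "x < t" "t < y"
  shows "(h y - h x) / (y - x) \<le> (h t - h x) / (t - x)"
    and "(h y - h t) / (y - t) \<le> (h y - h x) / (y - x)"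
proof -
  have swap: "u / (a - b) = - (u / (b - a))" for u a b :: real
    by (metis divide_minus_right minus_diff_eq)
  have "(h t - h x) / (x - t) \<le> (h y - h x) / (x - y)"
       "(h y - h x) / (x - y) \<le> (h y - h t) / (t - y)"
    using convex_on_slope_le[of I "\<lambda>x. - h x" x y t] assms by (simp_all add: concave_on_def)
  then show "(h y - h x) / (y - x) \<le> (h t - h x) / (t - x)"
       "(h y - h t) / (y - t) \<le> (h y - h x) / (y - x)"
    using swap[of "h t - h x" x t] swap[of "h y - h x" x y] swap[of "h y - h t" t y] by linarith+
qed

lemma concave_on_le_right_tangent:
  fixes h :: "real \<Rightarrow> real"
  assumes concave: "concave_on {l..r} h" and x: "x \<in> {l<..<r}" and D: "has_right_deriv h x D"
    and y: "y \<in> {l..r}"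
  shows "h y \<le> h x + D * (y - x)"
proof -
  have lim: "((\<lambda>w. (h w - h x) / (w - x)) \<longlongrightarrow> D) (at_right x)"
    using D unfolding has_right_deriv_def .
  consider "y = x" | "x < y" | "y < x" by linarith
  then show ?thesis
  proof cases
    case 1
    then show ?thesis by simp
  next
    case 2
    have "(h y - h x) / (y - x) \<le> D"
    proof (rule tendsto_lowerbound[OF lim])
      have "\<forall>\<^sub>F w in at_right x. w \<in> {x<..<y}"
        using 2 eventually_at_right_real by blast
      then show "\<forall>\<^sub>F w in at_right x. (h y - h x) / (y - x) \<le> (h w - h x) / (w - x)"
        by eventually_elim (use concave_on_slope_ge(1)[OF concave] x y in auto)
    qed simp
    with 2 show ?thesis by (simp add: field_simps)
  next
    case 3
    have "D \<le> (h x - h y) / (x - y)"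
    proof (rule tendsto_upperbound[OF lim])
      have "\<forall>\<^sub>F w in at_right x. w \<in> {x<..<r}"
        using x eventually_at_right_real by auto
      then show "\<forall>\<^sub>F w in at_right x. (h w - h x) / (w - x) \<le> (h x - h y) / (x - y)"
      proof eventually_elim
        case (elim w)
        then have "(h w - h x) / (w - x) \<le> (h w - h y) / (w - y)"
          and "(h w - h y) / (w - y) \<le> (h x - h y) / (x - y)"
          using concave_on_slope_ge[OF concave, of y w x] x y 3 by auto
        then show ?case by linarith
      qed
    qed simp
    with 3 show ?thesis by (simp add: field_simps)
  qed
qed

lemma concave_on_lipschitz_on_if_right_deriv_bounded:
  fixes h :: "real \<Rightarrow> real"
  assumes cont: "continuous_on {l..r} h" and concave: "concave_on {l..r} h" and "m \<ge> 0"
    and deriv: "\<forall>x\<in>{l<..<r}. \<exists>D. has_right_deriv h x D \<and> \<bar>D\<bar> \<le> m"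
  shows "m-lipschitz_on {l..r} h"
proof (cases "l < r")
  case True
  have "m-lipschitz_on {l<..<r} h"
  proof (rule lipschitz_onI)
    fix y z assume yz: "y \<in> {l<..<r}" "z \<in> {l<..<r}"
    obtain Dy Dz where "has_right_deriv h y Dy" "\<bar>Dy\<bar> \<le> m" "has_right_deriv h z Dz" "\<bar>Dz\<bar> \<le> m"
      using deriv yz by blast
    moreover from this have "h z \<le> h y + Dy * (z - y)" "h y \<le> h z + Dz * (y - z)"
      using concave_on_le_right_tangent[OF concave] yz by auto
    moreover have "\<bar>Dy * (z - y)\<bar> \<le> m * \<bar>y - z\<bar>" "\<bar>Dz * (y - z)\<bar> \<le> m * \<bar>y - z\<bar>"
      using calculation by (auto simp: abs_mult abs_minus_commute intro: mult_right_mono)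
    ultimately show "dist (h y) (h z) \<le> m * dist y z"
      unfolding dist_real_def by linarith
  qed fact
  then show ?thesis
    using lipschitz_on_closure[of m "{l<..<r}" h] cont True by simp
next
  case False
  show ?thesis
  proof (rule lipschitz_onI)
    fix y z assume "y \<in> {l..r}" "z \<in> {l..r}"
    with False have "y = z" by auto
    then show "dist (h y) (h z) \<le> m * dist y z" by simp
  qed fact
qed

lemma concave_on_ge_affine_between:
  fixes g :: "real \<Rightarrow> real"
  assumes concave: "concave_on {l..r} g" and "l \<le> p" "p \<le> x" "x \<le> q" "q \<le> r"
    and "a * p + b \<le> g p" "a * q + b \<le> g q"
  shows "a * x + b \<le> g x"
proof (cases "p = q")
  case True
  with assms show ?thesis by simp
next
  case False
  define t where "t = (x - p) / (q - p)"
  have "p < q" using assms False by simp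
  then have t: "0 \<le> t" "t \<le> 1" "t * (q - p) = x - p"
    using assms by (auto simp: t_def field_simps)
  then have x: "x = (1 - t) * p + t * q"
    by (simp add: algebra_simps)
  have "(1 - t) * g p + t * g q \<le> g ((1 - t) *\<^sub>R p + t *\<^sub>R q)"
    by (rule concave_onD[OF concave]) (use t assms in auto)
  then have "(1 - t) * g p + t * g q \<le> g x"
    by (simp add: x)
  moreover have "(1 - t) * (a * p + b) + t * (a * q + b) \<le> (1 - t) * g p + t * g q"
    using t assms by (intro add_mono mult_left_mono) auto
  moreover have "(1 - t) * (a * p + b) + t * (a * q + b) = a * x + b"
    unfolding x by (simp add: algebra_simps)
  ultimately show ?thesis by linarith
qed

lemma xExt_subset_Icc: "l \<le> r \<Longrightarrow> xExt h l r \<subseteq> {l..r}"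
  by (auto simp: xExt_def)

lemma xExt_disjoint_affine_interval:
  assumes "l \<le> a" "b \<le> r" and affine: "\<forall>y\<in>{a..b}. h y = c * y + d"
  shows "xExt h l r \<inter> {a<..<b} = {}"
proof -
  have "q \<notin> xExt h l r" if q: "a < q" "q < b" for q
  proof -
    define \<delta> where "\<delta> = min (q - a) (b - q)"
    have "\<delta> > 0" "{q-\<delta>..q+\<delta>} \<subseteq> {a..b}"
      using q by (auto simp: \<delta>_def)
    then have "\<exists>\<delta>>0. \<exists>c d. \<forall>y\<in>{q-\<delta>..q+\<delta>}. h y = c * y + d"
      using affine by blast
    then show ?thesis
      using q assms(1,2) by (auto simp: xExt_def)
  qed
  then show ?thesis by auto
qed

lemma touching_affine_nbhd_if_not_xExt:
  assumes below: "\<forall>y\<in>{l..r}. h y \<le> c * y + d"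
    and e: "e \<in> {l..r}" "e \<notin> xExt h l r" "h e = c * e + d"
  obtains \<delta> where "\<delta> > 0" "\<forall>y\<in>{e-\<delta>..e+\<delta>}. y \<in> {l..r} \<and> h y = c * y + d"
proof -
  from e obtain \<delta>0 a b where "\<delta>0 > 0" and affine: "\<forall>y\<in>{e-\<delta>0..e+\<delta>0}. h y = a * y + b"
    and "l < e" "e < r"
    by (auto simp: xExt_def)
  define \<delta> where "\<delta> = min \<delta>0 (min (e - l) (r - e))"
  have \<delta>: "\<delta> > 0" "{e-\<delta>..e+\<delta>} \<subseteq> {e-\<delta>0..e+\<delta>0}" "{e-\<delta>..e+\<delta>} \<subseteq> {l..r}"
    using \<open>\<delta>0 > 0\<close> \<open>l < e\<close> \<open>e < r\<close> by (auto simp: \<delta>_def)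
  have "a * y + b \<le> c * y + d" if "y \<in> {e-\<delta>..e+\<delta>}" for y
  proof -
    have "y \<in> {e-\<delta>0..e+\<delta>0}" "y \<in> {l..r}"
      using that \<delta> by auto
    then show ?thesis
      using affine below by fastforce
  qed
  then have "a * (e - \<delta>) + b \<le> c * (e - \<delta>) + d" "a * (e + \<delta>) + b \<le> c * (e + \<delta>) + d"
    using \<delta> by auto
  moreover have touch: "a * e + b = c * e + d"
    using affine e(3) \<open>\<delta>0 > 0\<close> by auto
  ultimately have "a * \<delta> = c * \<delta>"
    unfolding right_diff_distrib distrib_left by linarith
  with touch \<delta> have "a = c" "b = d"
    by auto
  then show ?thesis
    using that \<delta> affine by blast
qed

lemma concave_contact_interval:
  fixes h :: "real \<Rightarrow> real"
  assumes cont: "continuous_on {l..r} h" and concave: "concave_on {l..r} h"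
    and below: "\<forall>y\<in>{l..r}. h y \<le> c * y + d"
    and x: "x \<in> {l..r}" "h x = c * x + d"
  obtains e1 e2 where "e1 \<in> xExt h l r" "e2 \<in> xExt h l r" "e1 \<le> x" "x \<le> e2"
    "\<forall>y\<in>{e1..e2}. h y = c * y + d"
proof -
  define Z where "Z = {y \<in> {l..r}. h y - (c * y + d) = 0}"
  have "closed Z"
    unfolding Z_def using cont
    by (intro continuous_closed_preimage_constant continuous_intros) auto
  moreover have "x \<in> Z" "bdd_below Z" "bdd_above Z"
    using x by (auto simp: Z_def intro: bdd_belowI bdd_aboveI)
  ultimately have Z: "Inf Z \<in> Z" "Sup Z \<in> Z" "Inf Z \<le> x" "x \<le> Sup Z"
    by (auto intro: closed_contains_Inf closed_contains_Sup cInf_lower cSup_upper)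
  have bounds: "Inf Z \<le> y" "y \<le> Sup Z" if "y \<in> Z" for y
    using that \<open>bdd_below Z\<close> \<open>bdd_above Z\<close> by (auto intro: cInf_lower cSup_upper)
  have in_xExt: "e \<in> xExt h l r" if "e \<in> Z" and extremal: "\<And>\<delta>. \<delta> > 0 \<Longrightarrow> e - \<delta> \<notin> Z \<or> e + \<delta> \<notin> Z"
    for e
  proof (rule ccontr)
    assume "e \<notin> xExt h l r"
    then obtain \<delta> where "\<delta> > 0" "\<forall>y\<in>{e-\<delta>..e+\<delta>}. y \<in> {l..r} \<and> h y = c * y + d"
      using touching_affine_nbhd_if_not_xExt[OF below] \<open>e \<in> Z\<close> by (auto simp: Z_def)
    then show False
      using extremal[of \<delta>] by (auto simp: Z_def)
  qed
  have ends: "Inf Z \<in> xExt h l r" "Sup Z \<in> xExt h l r"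
    using in_xExt[of "Inf Z"] in_xExt[of "Sup Z"] Z bounds by force+
  have "h y = c * y + d" if y: "y \<in> {Inf Z..Sup Z}" for y
  proof -
    have "c * y + d \<le> h y"
      using concave_on_ge_affine_between[OF concave, of "Inf Z" y "Sup Z" c d] Z y
      by (auto simp: Z_def)
    moreover have "h y \<le> c * y + d"
      using below y Z by (auto simp: Z_def)
    ultimately show ?thesis by simp
  qed
  with that ends Z show ?thesis by blast
qed

lemma concave_bracketing_net_points:
  fixes h :: "real \<Rightarrow> real"
  assumes cont: "continuous_on {l..r} h" and concave: "concave_on {l..r} h"
    and lip: "m-lipschitz_on {l..r} h"
    and x: "x \<in> {l<..<r}" and deriv: "has_right_deriv h x c" "\<bar>c\<bar> \<le> m"
    and P: "P \<subseteq> xExt h l r" "l \<in> P" "r \<in> P"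
    and net: "\<forall>y\<in>xExt h l r. \<exists>p\<in>P. \<bar>p - y\<bar> < s"
  obtains p q a b where "p \<in> P" "q \<in> P" "p \<le> x" "x \<le> q"
    "a * p + b \<le> h p" "a * q + b \<le> h q" "a * x + b = h x - 2 * m * s"
proof -
  have "l \<le> r" using x by simp
  have P_Icc: "P \<subseteq> {l..r}"
    using P xExt_subset_Icc[OF \<open>l \<le> r\<close>] by blast
  have lipD: "\<bar>h y - h z\<bar> \<le> m * \<bar>y - z\<bar>" if "y \<in> {l..r}" "z \<in> {l..r}" for y z
    using lipschitz_onD[OF lip that] by (simp add: dist_real_def)
  have "m \<ge> 0"
    using lipschitz_on_nonneg[OF lip] .
  moreover have "s > 0"
    using net by (fastforce simp: xExt_def)
  ultimately have "m * s \<ge> 0"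
    by simp
  have x_Icc: "x \<in> {l..r}" using x by simp
  have below: "\<forall>y\<in>{l..r}. h y \<le> c * y + (h x - c * x)"
    using concave_on_le_right_tangent[OF concave x deriv(1)] by (simp add: algebra_simps)
  obtain e1 e2 where e: "e1 \<in> xExt h l r" "e2 \<in> xExt h l r" "e1 \<le> x" "x \<le> e2"
    and contact: "\<forall>y\<in>{e1..e2}. h y = c * y + (h x - c * x)"
    by (rule concave_contact_interval[OF cont concave below x_Icc]) simp
  have e_Icc: "e1 \<in> {l..r}" "e2 \<in> {l..r}"
    using e(1,2) xExt_subset_Icc[OF \<open>l \<le> r\<close>, of h] by blast+
  have gap: "p \<notin> {e1<..<e2}" if "p \<in> P" for p
    using xExt_disjoint_affine_interval[of l e1 e2 r h c "h x - c * x"] contact e_Icc P(1) that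
    by auto
  obtain q1 q2 where q: "q1 \<in> P" "\<bar>q1 - e1\<bar> < s" "q2 \<in> P" "\<bar>q2 - e2\<bar> < s"
    using net e by blast
  have far: "h x - m * \<bar>p - x\<bar> \<le> h p" if "p \<in> P" for p
    using lipD[of x p] P_Icc that x_Icc by (auto simp: abs_minus_commute)
  have near: "h x + m * \<bar>p - x\<bar> - 2 * m * s \<le> h p" if "p \<in> P" "\<bar>p - x\<bar> \<le> s" for p
    using far[OF that(1)] mult_left_mono[OF that(2) \<open>m \<ge> 0\<close>] by linarith
  consider "x < q1" | "q2 < x" | "q1 \<le> x" "x \<le> q2" by linarith
  then show ?thesis
  proof cases
    case 1
    then have "\<bar>q1 - x\<bar> \<le> s"
      using gap[OF q(1)] e q by auto
    show ?thesis
    proof (rule that[of l q1 m "h x - 2 * m * s - m * x"])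
      show "m * l + (h x - 2 * m * s - m * x) \<le> h l"
        using far[OF P(2)] x \<open>m * s \<ge> 0\<close> by (simp add: algebra_simps)
      show "m * q1 + (h x - 2 * m * s - m * x) \<le> h q1"
        using near[OF q(1) \<open>\<bar>q1 - x\<bar> \<le> s\<close>] 1 by (simp add: algebra_simps)
    qed (use P q 1 x in auto)
  next
    case 2
    then have "\<bar>q2 - x\<bar> \<le> s"
      using gap[OF q(3)] e q by auto
    show ?thesis
    proof (rule that[of q2 r "- m" "h x - 2 * m * s + m * x"])
      show "- m * r + (h x - 2 * m * s + m * x) \<le> h r"
        using far[OF P(3)] x \<open>m * s \<ge> 0\<close> by (simp add: algebra_simps)
      show "- m * q2 + (h x - 2 * m * s + m * x) \<le> h q2"
        using near[OF q(3) \<open>\<bar>q2 - x\<bar> \<le> s\<close>] 2 by (simp add: algebra_simps)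
    qed (use P q 2 x in auto)
  next
    case 3
    have near_contact: "c * p + (h x - c * x) - 2 * m * s \<le> h p" if "p \<in> P" "e \<in> {e1..e2}" "\<bar>p - e\<bar> < s" for p e
    proof -
      have "\<bar>h p - h e\<bar> \<le> m * \<bar>p - e\<bar>"
        using lipD[of p e] P_Icc that e_Icc by auto
      moreover have "\<bar>c * (p - e)\<bar> \<le> m * \<bar>p - e\<bar>"
        using deriv(2) by (simp add: abs_mult mult_right_mono)
      moreover have "m * \<bar>p - e\<bar> \<le> m * s"
        using that(3) \<open>m \<ge> 0\<close> by (simp add: mult_left_mono)
      moreover have "h e = c * e + (h x - c * x)"
        using contact that(2) by blast
      ultimately show ?thesis
        by (simp add: algebra_simps abs_le_iff)
    qed
    from near_contact[of q1 e1] near_contact[of q2 e2] show ?thesis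
      using that[of q1 q2 c "h x - c * x - 2 * m * s"] 3 q e by auto
  qed
qed

theorem mainTheorem20:
  fixes h hbar :: "real \<Rightarrow> real" and l r s m :: real and P :: "real set"
  assumes "continuous_on {l..r} h" and "concave_on {l..r} h"
    and "s > 0"
    and "P \<subseteq> xExt h l r" and "l \<in> P" and "r \<in> P"
    and "\<forall>y\<in>xExt h l r. \<exists>x\<in>P. \<bar>x - y\<bar> < s"
    and "m \<ge> 0"
    and "\<forall>x\<in>{l<..<r}. \<exists>D. has_right_deriv h x D \<and> \<bar>D\<bar> \<le> m"
    and "\<forall>x\<in>{l<..<r}. \<exists>D. has_left_deriv h x D \<and> \<bar>D\<bar> \<le> m"
    and "concave_on {l..r} hbar"
    and "\<forall>x\<in>P. hbar x \<ge> h x"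
  shows "\<forall>x\<in>{l..r}. hbar x + 2 * m * s \<ge> h x"
proof
  fix x assume x: "x \<in> {l..r}"
  show "hbar x + 2 * m * s \<ge> h x"
  proof (cases "x \<in> P")
    case True
    then show ?thesis
      using assms(3,8,12) by (simp add: add_increasing2)
  next
    case False
    with assms(5,6) have "x \<noteq> l" "x \<noteq> r" by auto
    with x have x_int: "x \<in> {l<..<r}" by simp
    then obtain c where c: "has_right_deriv h x c" "\<bar>c\<bar> \<le> m"
      using assms(9) by blast
    have lip: "m-lipschitz_on {l..r} h"
      using concave_on_lipschitz_on_if_right_deriv_bounded assms(1,2,8,9) by blast
    obtain p q a b where "p \<in> P" "q \<in> P" "p \<le> x" "x \<le> q"
      and "a * p + b \<le> h p" "a * q + b \<le> h q" and ab: "a * x + b = h x - 2 * m * s"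
      by (rule concave_bracketing_net_points[OF assms(1,2) lip x_int c assms(4-7)])
    moreover have "P \<subseteq> {l..r}"
      using assms(4) xExt_subset_Icc[of l r h] x by auto
    ultimately have "a * x + b \<le> hbar x"
      using concave_on_ge_affine_between[OF assms(11), of p x q a b] assms(12) by fastforce
    with ab show ?thesis by simp
  qed
qed

end
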